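(* For every positive integer $m$ one has $\mathcal C_m\subseteq \mathcal C_{m+1}$. Moreover, every odd integer $k\ge 3$ belongs to $\mathcal C_{u}$ where $u=\lceil \log_2 k\rceil$; consequently the set of all odd positive integers equals $\bigcup_{m\ge1}\mathcal C_m$.
   Context: For a positive integer $m$, $\mathcal C_m$ is the set of odd positive integers $k$ for which there exist integers $0\le j_1<j_2<\cdots<j_m\le m+k-2$ such that $2^{k+m}-1\equiv \sum_{i=1}^m 2^{j_i}\pmod k$. *)

theory Defs
  imports "HOL-Number_Theory.Number_Theory"
begin

text \<open>A strictly increasing
  m-tuple of indices is the same as an m-element subset J of {0..m+k-2}.\<close>
definition Cset :: "nat \<Rightarrow> nat set" where
  "Cset m = {k::nat. odd k \<and> 0 < k \<and>
     (\<exists>J. J \<subseteq> {0..m + k - 2} \<and> card J = m \<and>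
        [2 ^ (k + m) - 1 = (\<Sum>j\<in>J. 2 ^ j)] (mod k))}"

end

theory Submission
  imports Defs "HOL-Library.Log_Nat"
begin

(* Proof idea.
   (1) Monotonicity: from a witness J for k in C_m, the set {0} \<union> (J + 1) is a witness
       for k in C_(m+1), because 2^(k+m+1) - 1 = 1 + 2 (2^(k+m) - 1).
   (2) For odd k \<ge> 3 put u = \<lceil>log2 k\<rceil> = ceillog2 k and n = k - 1, so that
       2^(u-1) \<le> n < 2^u.  Let A be the binary digits of n below u and B the remaining
       positions below u.  Then J = A \<union> (B + k) has u elements, lies in {0..u+k-2}
       (position u-1 belongs to A), and
         \<Sum>J 2^j = n + 2^k (2^u - 1 - n) = 2^(k+u) - 1 - k (2^k - 1),
       which is congruent to 2^(k+u) - 1 modulo k.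
   (3) Every C_m consists of odd positive integers, 1 \<in> C_1, and (2) covers k \<ge> 3.
   The file first proves the arithmetic facts about binary digits, then the two
   membership criteria for C_m, and derives the theorem from them. *)

lemma sum_pow2_set_bits:
  "(\<Sum>j\<in>{j. j < u \<and> bit n j}. (2::nat) ^ j) = take_bit u n"
proof -
  have "{j. j < u \<and> bit n j} = {..<u} \<inter> {j. bit n j}" by auto
  then show ?thesis
    by (simp add: take_bit_sum push_bit_eq_mult atLeast0LessThan)
qed

lemma sum_pow2_unset_bits:
  assumes "n < 2 ^ u"
  shows "(\<Sum>j\<in>{j. j < u \<and> \<not> bit n j}. (2::nat) ^ j) = 2 ^ u - 1 - n"
proof -
  have split: "{j. j < u} = {j. j < u \<and> bit n j} \<union> {j. j < u \<and> \<not> bit n j}" by auto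
  have "(\<Sum>j\<in>{j. j < u \<and> bit n j}. (2::nat) ^ j) + (\<Sum>j\<in>{j. j < u \<and> \<not> bit n j}. 2 ^ j)
      = (\<Sum>j\<in>{j. j < u}. 2 ^ j)"
    unfolding split by (rule sum.union_disjoint [symmetric]) auto
  also have "\<dots> = 2 ^ u - 1"
    by (rule mask_eq_sum_exp [symmetric])
  finally show ?thesis
    using assms by (simp add: sum_pow2_set_bits take_bit_nat_eq_self)
qed

lemma binary_complement_identity:
  fixes k n u :: nat
  assumes "n < 2 ^ u"
  shows "n + 2 ^ k * (2 ^ u - 1 - n) + (n + 1) * (2 ^ k - 1) = 2 ^ (k + u) - 1"
proof -
  have pow_k: "int (2 ^ k - 1) = 2 ^ k - 1"
    by (simp add: of_nat_diff)
  have complement: "int (2 ^ u - 1 - n) = 2 ^ u - 1 - int n"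
    using assms by (simp add: of_nat_diff)
  have "int (n + 2 ^ k * (2 ^ u - 1 - n) + (n + 1) * (2 ^ k - 1))
      = int n + 2 ^ k * (2 ^ u - 1 - int n) + (int n + 1) * (2 ^ k - 1)"
    unfolding of_nat_add of_nat_mult pow_k complement by simp
  also have "\<dots> = 2 ^ (k + u) - 1"
    by (simp add: algebra_simps power_add)
  also have "\<dots> = int (2 ^ (k + u) - 1)"
    by (simp add: of_nat_diff)
  finally show ?thesis by (simp only: of_nat_eq_iff)
qed

lemma Cset_Suc:
  assumes m: "0 < m" and k: "k \<in> Cset m"
  shows "k \<in> Cset (m + 1)"
proof -
  from k obtain J where kk: "odd k" "0 < k" and J: "J \<subseteq> {0..m + k - 2}" "card J = m"
    and c: "[2 ^ (k + m) - 1 = (\<Sum>j\<in>J. 2 ^ j)] (mod k)"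
    unfolding Cset_def by auto
  have fin: "finite J" using J(1) finite_subset by blast
  define J' where "J' = insert 0 (Suc ` J)"
  have "J' \<subseteq> {0..(m + 1) + k - 2}" using J(1) m kk unfolding J'_def by auto
  moreover have "card J' = m + 1" unfolding J'_def using fin J(2)
    by (simp add: card_image)
  moreover have "(\<Sum>j\<in>J'. (2::nat) ^ j) = 1 + 2 * (\<Sum>j\<in>J. 2 ^ j)"
    unfolding J'_def using fin by (simp add: sum.reindex sum_distrib_left)
  moreover have "[2 ^ (k + (m + 1)) - 1 = 1 + 2 * (\<Sum>j\<in>J. (2::nat) ^ j)] (mod k)"
  proof -
    have "2 ^ (k + (m + 1)) = 2 * (2::nat) ^ (k + m)" "(1::nat) \<le> 2 ^ (k + m)"
      by simp_all
    then have "2 ^ (k + (m + 1)) - 1 = 1 + 2 * (2 ^ (k + m) - (1::nat))"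
      by arith
    also have "[\<dots> = 1 + 2 * (\<Sum>j\<in>J. 2 ^ j)] (mod k)"
      using c by (intro cong_add cong_mult) auto
    finally show ?thesis .
  qed
  ultimately show ?thesis using kk unfolding Cset_def by auto
qed

definition digit_witness :: "nat \<Rightarrow> nat \<Rightarrow> nat \<Rightarrow> nat set" where
  "digit_witness k n u = {j. j < u \<and> bit n j} \<union> (\<lambda>j. k + j) ` {j. j < u \<and> \<not> bit n j}"

lemma digit_witness_disjoint:
  assumes "u \<le> k"
  shows "{j. j < u \<and> bit n j} \<inter> (\<lambda>j. k + j) ` {j. j < u \<and> \<not> bit n j} = {}"
  using assms by auto

lemma card_digit_witness:
  assumes "u \<le> k"
  shows "card (digit_witness k n u) = u"
proof -
  have "card (digit_witness k n u)
      = card {j. j < u \<and> bit n j} + card {j. j < u \<and> \<not> bit n j}"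
    unfolding digit_witness_def
    by (simp add: card_Un_disjoint [OF _ _ digit_witness_disjoint [OF assms]] card_image)
  also have "\<dots> = card ({j. j < u \<and> bit n j} \<union> {j. j < u \<and> \<not> bit n j})"
    by (rule card_Un_disjoint [symmetric]) auto
  also have "{j. j < u \<and> bit n j} \<union> {j. j < u \<and> \<not> bit n j} = {..<u}" by auto
  finally show ?thesis by simp
qed

lemma sum_digit_witness:
  assumes "u \<le> k" "n < 2 ^ u"
  shows "(\<Sum>j\<in>digit_witness k n u. (2::nat) ^ j) = n + 2 ^ k * (2 ^ u - 1 - n)"
proof -
  have "(\<Sum>j\<in>digit_witness k n u. (2::nat) ^ j)
      = (\<Sum>j\<in>{j. j < u \<and> bit n j}. 2 ^ j) + (\<Sum>j\<in>(\<lambda>j. k + j) ` {j. j < u \<and> \<not> bit n j}. 2 ^ j)"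
    unfolding digit_witness_def
    by (simp add: sum.union_disjoint [OF _ _ digit_witness_disjoint [OF assms(1)]])
  also have "(\<Sum>j\<in>(\<lambda>j. k + j) ` {j. j < u \<and> \<not> bit n j}. (2::nat) ^ j)
      = 2 ^ k * (\<Sum>j\<in>{j. j < u \<and> \<not> bit n j}. 2 ^ j)"
    by (simp add: sum.reindex power_add sum_distrib_left)
  finally show ?thesis
    using assms(2) by (simp add: sum_pow2_set_bits take_bit_nat_eq_self sum_pow2_unset_bits)
qed

lemma digit_witness_bounded:
  assumes "0 < k" "bit n (u - 1)"
  shows "digit_witness k n u \<subseteq> {0..u + k - 2}"
proof
  fix x assume "x \<in> digit_witness k n u"
  then consider "x < u" | j where "j < u" "\<not> bit n j" "x = k + j"
    unfolding digit_witness_def by auto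
  then show "x \<in> {0..u + k - 2}"
  proof cases
    case 1
    with assms(1) show ?thesis by auto
  next
    case 2
    then have "j \<noteq> u - 1" using assms(2) by auto
    with 2 show ?thesis by auto
  qed
qed

lemma Cset_binary_length:
  assumes k: "odd k" and u: "0 < u" and lower: "2 ^ (u - 1) < k" and upper: "k \<le> 2 ^ u"
  shows "k \<in> Cset u"
proof -
  define n where "n = k - 1"
  have "k \<noteq> 2 ^ u" using k u by auto
  with upper have n_less: "n < 2 ^ u" unfolding n_def by simp
  have "n div 2 ^ (u - 1) = 1"
  proof (rule div_nat_eqI)
    have "(2::nat) ^ u = 2 * 2 ^ (u - 1)" using u by (simp flip: power_Suc)
    then show "n < 2 ^ (u - 1) * Suc 1" using n_less by simp
  qed (use lower n_def in simp)
  then have top_bit: "bit n (u - 1)" by (simp add: bit_iff_odd)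
  have "u - 1 < 2 ^ (u - 1)" by (rule less_exp)
  with lower u have u_le: "u \<le> k" by linarith
  have "2 ^ (k + u) - 1 = (\<Sum>j\<in>digit_witness k n u. 2 ^ j) + k * (2 ^ k - 1)"
    using binary_complement_identity [OF n_less, of k] sum_digit_witness [OF u_le n_less]
    unfolding n_def using lower by simp
  then have "[2 ^ (k + u) - 1 = (\<Sum>j\<in>digit_witness k n u. 2 ^ j)] (mod k)"
    by (simp add: cong_def)
  moreover have "digit_witness k n u \<subseteq> {0..u + k - 2}"
    using lower top_bit by (intro digit_witness_bounded) auto
  moreover have "odd k \<and> 0 < k" using k lower by simp
  ultimately show ?thesis
    using card_digit_witness [OF u_le] unfolding Cset_def by blast
qed

lemma ceillog2_bounds:
  fixes k :: nat
  assumes "2 \<le> k"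
  shows "0 < ceillog2 k" "2 ^ (ceillog2 k - 1) < k" "k \<le> 2 ^ ceillog2 k"
proof -
  show pos: "0 < ceillog2 k"
    using ceillog2_ge_iff [of k 1] assms by simp
  have "2 * 2 ^ (ceillog2 k - 1) = (2::nat) ^ ceillog2 k"
    using pos by (simp flip: power_Suc)
  also have "\<dots> < 2 * k"
    using assms by (intro two_power_ceillog2_gt) simp
  finally show "2 ^ (ceillog2 k - 1) < k" by simp
  show "k \<le> 2 ^ ceillog2 k" by (rule le_two_power_ceillog2)
qed

lemma Cset_ceil_log2:
  assumes "odd k" "3 \<le> k"
  shows "k \<in> Cset (nat \<lceil>log 2 (real k)\<rceil>)"
proof -
  have "nat \<lceil>log 2 (real k)\<rceil> = ceillog2 k"
    using assms by (simp add: ceillog2_def)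
  moreover have "k \<in> Cset (ceillog2 k)"
    using assms ceillog2_bounds [of k] by (intro Cset_binary_length) auto
  ultimately show ?thesis by simp
qed

lemma one_in_Cset_one: "1 \<in> Cset 1"
  unfolding Cset_def by (auto intro!: exI [of _ "{0}"] simp: cong_def)

lemma odd_in_some_Cset:
  assumes "odd k" "0 < k"
  shows "\<exists>m\<ge>1. k \<in> Cset m"
proof (cases "k = 1")
  case True
  then show ?thesis using one_in_Cset_one by blast
next
  case False
  with assms have "3 \<le> k" by (auto elim: oddE)
  then have "1 \<le> ceillog2 k" "k \<in> Cset (ceillog2 k)"
    using assms ceillog2_bounds [of k] by (auto intro: Cset_binary_length)
  then show ?thesis by blast
qed

theorem mainTheorem4:
  shows "(\<forall>m::nat. 0 < m \<longrightarrow> Cset m \<subseteq> Cset (m + 1))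
    \<and> (\<forall>k::nat. odd k \<and> 3 \<le> k \<longrightarrow> k \<in> Cset (nat \<lceil>log 2 (real k)\<rceil>))
    \<and> {k::nat. odd k \<and> 0 < k} = (\<Union>m\<in>{1..}. Cset m)"
proof (intro conjI)
  show "\<forall>m::nat. 0 < m \<longrightarrow> Cset m \<subseteq> Cset (m + 1)"
    using Cset_Suc by blast
  show "\<forall>k::nat. odd k \<and> 3 \<le> k \<longrightarrow> k \<in> Cset (nat \<lceil>log 2 (real k)\<rceil>)"
    using Cset_ceil_log2 by blast
  have "{k::nat. odd k \<and> 0 < k} \<subseteq> (\<Union>m\<in>{1..}. Cset m)"
    using odd_in_some_Cset by fastforce
  moreover have "(\<Union>m\<in>{1..}. Cset m) \<subseteq> {k::nat. odd k \<and> 0 < k}"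
    unfolding Cset_def by auto
  ultimately show "{k::nat. odd k \<and> 0 < k} = (\<Union>m\<in>{1..}. Cset m)"
    by (rule subset_antisym)
qed

end
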